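(* For $[i,j]\in W^P$, $k\in\{1,2\}$ and $d=(d_1,d_2)\in\mathbb{Z}_{\ge0}^2$, \[\Gamma_d(X_{[i,j]},D^{[k]})=\begin{cases}\Gamma_d(X_{[i,j]}) & \text{if } d_k>0,\\ \Gamma_d(X_{[i,j]})\cap D^{[k]} & \text{if } d_k=0.\end{cases}\]
   Context: Let $n\ge 3$ and $X=\mathrm{Fl}(1,n-1;n)$, the variety of flags $U\subset V\subset\mathbb{C}^n$ with $\dim U=1,\dim V=n-1$, with projections $p_1:(U,V)\mapsto U$, $p_2:(U,V)\mapsto V$; $X$ is the hypersurface $x_1y_1+\dots+x_ny_n=0$ in $\mathbb{P}(\mathbb{C}^n)\times\mathbb{P}((\mathbb{C}^n)^* )$. $W^P$ is the set of pairs $[i,j]$ of distinct integers in $\{1,\dots,n\}$; $X_{[i,j]}$ is the Schubert variety $x_{i+1}=\dots=x_n=y_1=\dots=y_{j-1}=0$. $D^{[1]}=\{x_1=0\}$, $D^{[2]}=\{y_n=0\}$. A degree $d=(d_1,d_2)$ of a stable map $f$ means $p_1\circ f$ has degree $d_1$ and $p_2\circ f$ degree $d_2$. $M_d=\overline{M}_{0,3}(X,d)$ with evaluation maps $\mathrm{ev}_1,\mathrm{ev}_2,\mathrm{ev}_3$; $\Gamma_d(X_1)=\mathrm{ev}_2(\mathrm{ev}_1^{-1}(X_1))$ and $\Gamma_d(X_1,X_2)=\mathrm{ev}_3(\mathrm{ev}_1^{-1}(X_1)\cap\mathrm{ev}_2^{-1}(X_2))$. *)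

theory Defs
  imports Complex_Main
begin

(* Points of P(C^n) x P((C^n)^* ) are represented by pairs of nonzero vectors
   x, y :: nat => complex supported on {1..n}; all sets of points below are
   invariant under rescaling of representatives. *)

type_synonym cvec = "nat \<Rightarrow> complex"

definition in_space :: "nat \<Rightarrow> cvec \<Rightarrow> bool" where
  "in_space n x \<longleftrightarrow> (\<forall>k. (k < 1 \<or> n < k) \<longrightarrow> x k = 0)"

definition nonzero_vec :: "cvec \<Rightarrow> bool" where
  "nonzero_vec x \<longleftrightarrow> (\<exists>k. x k \<noteq> 0)"

(* the flag variety X = Fl(1,n-1;n) as the hypersurface sum x_k y_k = 0 *)
definition Xpts :: "nat \<Rightarrow> (cvec \<times> cvec) set" where
  "Xpts n = {(x, y). in_space n x \<and> in_space n y \<and> nonzero_vec x \<and> nonzero_vec y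
                   \<and> (\<Sum>k=1..n. x k * y k) = 0}"

definition proj_eq :: "cvec \<Rightarrow> cvec \<Rightarrow> bool" where
  "proj_eq x x' \<longleftrightarrow> (\<exists>c. c \<noteq> 0 \<and> x' = (\<lambda>k. c * x k))"

definition pt_eq :: "cvec \<times> cvec \<Rightarrow> cvec \<times> cvec \<Rightarrow> bool" where
  "pt_eq p p' \<longleftrightarrow> proj_eq (fst p) (fst p') \<and> proj_eq (snd p) (snd p')"

definition WP :: "nat \<Rightarrow> (nat \<times> nat) set" where
  "WP n = {(i, j). i \<in> {1..n} \<and> j \<in> {1..n} \<and> i \<noteq> j}"

definition schubert :: "nat \<Rightarrow> nat \<Rightarrow> nat \<Rightarrow> (cvec \<times> cvec) set" where
  "schubert n i j = {(x, y) \<in> Xpts n. (\<forall>k. i < k \<and> k \<le> n \<longrightarrow> x k = 0)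
                                    \<and> (\<forall>k. 1 \<le> k \<and> k < j \<longrightarrow> y k = 0)}"

definition Ddiv :: "nat \<Rightarrow> nat \<Rightarrow> (cvec \<times> cvec) set" where
  "Ddiv n k = (if k = 1 then {(x, y) \<in> Xpts n. x 1 = 0} else {(x, y) \<in> Xpts n. y n = 0})"

definition dcomp :: "nat \<times> nat \<Rightarrow> nat \<Rightarrow> nat" where
  "dcomp d k = (if k = 1 then fst d else snd d)"

(* points of P^1 : nonzero pairs (s,t); a binary form of degree e with coefficients a *)
definition form_eval :: "nat \<Rightarrow> (nat \<Rightarrow> complex) \<Rightarrow> complex \<times> complex \<Rightarrow> complex" where
  "form_eval e a z = (\<Sum>k\<le>e. a k * fst z ^ k * snd z ^ (e - k))"

definition curve_eval :: "nat \<Rightarrow> (nat \<Rightarrow> nat \<Rightarrow> complex) \<Rightarrow> complex \<times> complex \<Rightarrow> cvec" where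
  "curve_eval e F z = (\<lambda>i. form_eval e (F i) z)"

definition p1_distinct :: "complex \<times> complex \<Rightarrow> complex \<times> complex \<Rightarrow> bool" where
  "p1_distinct z w \<longleftrightarrow> fst z * snd w \<noteq> snd z * fst w"

(* a morphism P^1 -> X given by n binary forms of degree e1 (for p_1) and n binary forms
   of degree e2 (for p_2), without common zeros; p_1 o f has degree e1, p_2 o f degree e2 *)
definition is_morphism :: "nat \<Rightarrow> nat \<Rightarrow> nat \<Rightarrow> (nat \<Rightarrow> nat \<Rightarrow> complex) \<Rightarrow> (nat \<Rightarrow> nat \<Rightarrow> complex) \<Rightarrow> bool" where
  "is_morphism n e1 e2 F G \<longleftrightarrow>
     (\<forall>i k. (i < 1 \<or> n < i) \<longrightarrow> F i k = 0 \<and> G i k = 0) \<and>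
     (\<forall>z. z \<noteq> (0, 0) \<longrightarrow> (curve_eval e1 F z, curve_eval e2 G z) \<in> Xpts n)"

(* ---------- genus 0 stable maps with 3 marked points ----------
   Domain: a tree of P^1's, components 0..<ncomp; every component c >= 1 is glued at its
   point qpt c to the point ppt c of its parent component par c < c (every finite tree
   admits such an ordering). *)

record smap =
  ncomp :: nat
  cdeg :: "nat \<Rightarrow> nat \<times> nat"
  cF :: "nat \<Rightarrow> nat \<Rightarrow> nat \<Rightarrow> complex"
  cG :: "nat \<Rightarrow> nat \<Rightarrow> nat \<Rightarrow> complex"
  par :: "nat \<Rightarrow> nat"
  ppt :: "nat \<Rightarrow> complex \<times> complex"
  qpt :: "nat \<Rightarrow> complex \<times> complex"
  mcomp :: "nat \<Rightarrow> nat"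
  mpt :: "nat \<Rightarrow> complex \<times> complex"

datatype special = Up | Down nat | Mark nat

definition specials :: "smap \<Rightarrow> nat \<Rightarrow> special set" where
  "specials f c = (if 1 \<le> c then {Up} else {}) \<union>
                  {Down c' | c'. 1 \<le> c' \<and> c' < ncomp f \<and> par f c' = c} \<union>
                  {Mark j | j. j \<in> {1, 2, 3} \<and> mcomp f j = c}"

fun special_pt :: "smap \<Rightarrow> nat \<Rightarrow> special \<Rightarrow> complex \<times> complex" where
  "special_pt f c Up = qpt f c"
| "special_pt f c (Down c') = ppt f c'"
| "special_pt f c (Mark j) = mpt f j"

definition cval :: "smap \<Rightarrow> nat \<Rightarrow> complex \<times> complex \<Rightarrow> cvec \<times> cvec" where
  "cval f c z = (curve_eval (fst (cdeg f c)) (cF f c) z, curve_eval (snd (cdeg f c)) (cG f c) z)"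

definition is_stable_map :: "nat \<Rightarrow> nat \<times> nat \<Rightarrow> smap \<Rightarrow> bool" where
  "is_stable_map n d f \<longleftrightarrow>
     ncomp f \<ge> 1 \<and>
     (\<forall>c < ncomp f. is_morphism n (fst (cdeg f c)) (snd (cdeg f c)) (cF f c) (cG f c)) \<and>
     (\<Sum>c<ncomp f. fst (cdeg f c)) = fst d \<and>
     (\<Sum>c<ncomp f. snd (cdeg f c)) = snd d \<and>
     (\<forall>c. 1 \<le> c \<and> c < ncomp f \<longrightarrow>
          par f c < c \<and> qpt f c \<noteq> (0, 0) \<and> ppt f c \<noteq> (0, 0) \<and>
          pt_eq (cval f c (qpt f c)) (cval f (par f c) (ppt f c))) \<and>
     (\<forall>j \<in> {1, 2, 3}. mcomp f j < ncomp f \<and> mpt f j \<noteq> (0, 0)) \<and>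
     (\<forall>c < ncomp f. \<forall>l \<in> specials f c. \<forall>l' \<in> specials f c.
          l \<noteq> l' \<longrightarrow> p1_distinct (special_pt f c l) (special_pt f c l')) \<and>
     (\<forall>c < ncomp f. cdeg f c = (0, 0) \<longrightarrow> card (specials f c) \<ge> 3)"

definition ev :: "smap \<Rightarrow> nat \<Rightarrow> cvec \<times> cvec" where
  "ev f j = cval f (mcomp f j) (mpt f j)"

definition Gamma1 :: "nat \<Rightarrow> nat \<times> nat \<Rightarrow> (cvec \<times> cvec) set \<Rightarrow> (cvec \<times> cvec) set" where
  "Gamma1 n d X1 = {p \<in> Xpts n. \<exists>f. is_stable_map n d f \<and>
       (\<exists>a \<in> X1. pt_eq (ev f 1) a) \<and> pt_eq (ev f 2) p}"

definition Gamma2 :: "nat \<Rightarrow> nat \<times> nat \<Rightarrow> (cvec \<times> cvec) set \<Rightarrow> (cvec \<times> cvec) set \<Rightarrow> (cvec \<times> cvec) set" where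
  "Gamma2 n d X1 X2 = {p \<in> Xpts n. \<exists>f. is_stable_map n d f \<and>
       (\<exists>a \<in> X1. pt_eq (ev f 1) a) \<and> (\<exists>b \<in> X2. pt_eq (ev f 2) b) \<and> pt_eq (ev f 3) p}"

end

(*
  Swapping the marked points 2 and 3 of stable maps shows that Gamma_d(X_1, D) is always
  contained in Gamma_d(X_1).

  If d_k = 0, every component has degree 0 in direction k, so the coordinate cutting out D^[k]
  (x_1, resp. y_n) is constant on each component, and the gluing conditions pass its vanishing
  from component to component: such a curve lies in D^[k] or misses it altogether.

  If d_k > 0, take a stable map through X_1 and p, forget its third marked point and contract
  the constant component that this destabilises, if any. Some component has positive degree in
  direction k, so the binary form describing the coordinate of D^[k] on it has a zero. A new
  marked point is put there, on a constant bubble if the zero is a special point, and swapping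
  the marked points 2 and 3 yields a curve exhibiting p \<in> Gamma_d(X_1, D^[k]).
*)

theory Submission
  imports Defs "HOL-Computational_Algebra.Fundamental_Theorem_Algebra"
begin

section \<open>Projective points and binary forms\<close>

lemma proj_eq_refl: "proj_eq x x"
  unfolding proj_eq_def by (intro exI[of _ 1]) simp

lemma proj_eq_sym: "proj_eq x y \<Longrightarrow> proj_eq y x"
  unfolding proj_eq_def
  by (metis (no_types, lifting) mult.assoc mult_1 left_inverse inverse_nonzero_iff_nonzero)

lemma proj_eq_trans: "proj_eq x y \<Longrightarrow> proj_eq y z \<Longrightarrow> proj_eq x z"
  unfolding proj_eq_def by (metis (no_types, lifting) mult.assoc mult_eq_0_iff)

lemma pt_eq_refl: "pt_eq p p"
  unfolding pt_eq_def by (simp add: proj_eq_refl)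

lemma pt_eq_sym: "pt_eq p q \<Longrightarrow> pt_eq q p"
  unfolding pt_eq_def by (simp add: proj_eq_sym)

lemma pt_eq_trans: "pt_eq p q \<Longrightarrow> pt_eq q s \<Longrightarrow> pt_eq p s"
  unfolding pt_eq_def by (blast intro: proj_eq_trans)

lemma form_eval_homogeneous: "form_eval e a (l * s, l * t) = l ^ e * form_eval e a (s, t)"
proof -
  have "a k * (l * s) ^ k * (l * t) ^ (e - k) = l ^ e * (a k * s ^ k * t ^ (e - k))" if "k \<le> e" for k
  proof -
    have "l ^ k * l ^ (e - k) = l ^ e" using that by (simp flip: power_add)
    then show ?thesis by (simp add: power_mult_distrib algebra_simps)
  qed
  then show ?thesis unfolding form_eval_def sum_distrib_left by (intro sum.cong) auto
qed

lemma form_eval_0: "form_eval 0 a z = a 0"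
  unfolding form_eval_def by simp

lemma form_eval_1_0: "form_eval e a (1, 0) = a e"
proof -
  have "form_eval e a (1, 0) = (\<Sum>k\<le>e. if k = e then a k else 0)"
    unfolding form_eval_def by (rule sum.cong) auto
  then show ?thesis by simp
qed

lemma binary_form_has_root:
  assumes "e > 0"
  shows "\<exists>z. z \<noteq> (0, 0) \<and> form_eval e a z = 0"
proof (cases "a e = 0")
  case True
  then show ?thesis by (intro exI[of _ "(1, 0)"]) (simp add: form_eval_1_0)
next
  case False
  define p where "p = (\<Sum>k\<le>e. monom (a k) k)"
  have coeff_p: "coeff p i = (if i \<le> e then a i else 0)" for i
    unfolding p_def by (simp add: coeff_sum coeff_monom)
  have "degree p = e"
    by (intro antisym degree_le le_degree) (auto simp: coeff_p False)
  then have "\<not> constant (poly p)" using assms by (simp add: constant_degree)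
  then obtain s where "poly p s = 0" using fundamental_theorem_of_algebra by blast
  moreover have "poly p s = form_eval e a (s, 1)"
    unfolding poly_altdef \<open>degree p = e\<close> form_eval_def by (rule sum.cong) (auto simp: coeff_p)
  ultimately show ?thesis by (intro exI[of _ "(s, 1)"]) simp
qed

lemma not_p1_distinct_proportional:
  assumes "z \<noteq> (0, 0)" "\<not> p1_distinct z w"
  shows "\<exists>l. w = (l * fst z, l * snd z)"
proof (cases "fst z = 0")
  case True
  with assms have "snd z \<noteq> 0" "fst w = 0" unfolding p1_distinct_def by (cases z; auto)+
  with True show ?thesis by (intro exI[of _ "snd w / snd z"]) (cases w, auto)
next
  case False
  with assms(2) have "snd w = fst w / fst z * snd z" unfolding p1_distinct_def by (simp add: field_simps)
  with False show ?thesis by (intro exI[of _ "fst w / fst z"]) (cases w, auto)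
qed

lemma p1_distinct_commute: "p1_distinct z w \<longleftrightarrow> p1_distinct w z"
  unfolding p1_distinct_def by (auto simp: mult.commute)

lemma cval_pt_eq_if_not_p1_distinct:
  assumes "z \<noteq> (0, 0)" "w \<noteq> (0, 0)" "\<not> p1_distinct z w"
  shows "pt_eq (cval f c z) (cval f c w)"
proof -
  obtain l where w: "w = (l * fst z, l * snd z)" using not_p1_distinct_proportional assms by blast
  with assms(2) have "l \<noteq> 0" by auto
  have cw: "cval f c w = ((\<lambda>i. l ^ fst (cdeg f c) * fst (cval f c z) i),
                          (\<lambda>i. l ^ snd (cdeg f c) * snd (cval f c z) i))"
    unfolding w cval_def curve_eval_def by (simp add: form_eval_homogeneous)
  have "proj_eq (fst (cval f c z)) (fst (cval f c w))"
    unfolding proj_eq_def cw using \<open>l \<noteq> 0\<close> by (intro exI[of _ "l ^ fst (cdeg f c)"]) simp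
  moreover have "proj_eq (snd (cval f c z)) (snd (cval f c w))"
    unfolding proj_eq_def cw using \<open>l \<noteq> 0\<close> by (intro exI[of _ "l ^ snd (cdeg f c)"]) simp
  ultimately show ?thesis unfolding pt_eq_def ..
qed

lemma cval_degree_0: "cdeg f c = (0, 0) \<Longrightarrow> cval f c z = cval f c w"
  unfolding cval_def curve_eval_def by (simp add: form_eval_0)

lemma cval_in_Xpts:
  "is_morphism n (fst (cdeg f c)) (snd (cdeg f c)) (cF f c) (cG f c) \<Longrightarrow> z \<noteq> (0, 0) \<Longrightarrow>
   cval f c z \<in> Xpts n"
  unfolding is_morphism_def cval_def by blast

lemma curve_eval_const: "curve_eval 0 (\<lambda>i k. u i) z = u"
  unfolding curve_eval_def by (simp add: form_eval_0)

lemma is_morphism_const: "v \<in> Xpts n \<Longrightarrow> is_morphism n 0 0 (\<lambda>i k. fst v i) (\<lambda>i k. snd v i)"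
  unfolding is_morphism_def curve_eval_const by (auto simp: Xpts_def in_space_def)

definition divisor_coord :: "nat \<Rightarrow> nat \<Rightarrow> cvec \<times> cvec \<Rightarrow> complex" where
  "divisor_coord n k p = (if k = 1 then fst p 1 else snd p n)"

lemma Ddiv_iff: "p \<in> Ddiv n k \<longleftrightarrow> p \<in> Xpts n \<and> divisor_coord n k p = 0"
  unfolding Ddiv_def divisor_coord_def by (cases p) auto

lemma divisor_coord_pt_eq: "pt_eq p q \<Longrightarrow> divisor_coord n k p = 0 \<longleftrightarrow> divisor_coord n k q = 0"
  unfolding pt_eq_def proj_eq_def divisor_coord_def by auto

lemma divisor_coord_cval:
  "divisor_coord n k (cval f c z) =
     form_eval (dcomp (cdeg f c) k) (if k = 1 then cF f c 1 else cG f c n) z"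
  unfolding divisor_coord_def cval_def dcomp_def curve_eval_def by auto

section \<open>Prestable maps in tree form\<close>

definition stable_at :: "smap \<Rightarrow> nat \<Rightarrow> special set \<Rightarrow> bool" where
  "stable_at f c S \<longleftrightarrow>
     (\<forall>l\<in>S. \<forall>l'\<in>S. l \<noteq> l' \<longrightarrow> p1_distinct (special_pt f c l) (special_pt f c l')) \<and>
     (cdeg f c = (0, 0) \<longrightarrow> 3 \<le> card S)"

lemma stable_atI:
  assumes "\<And>l l'. l \<in> S \<Longrightarrow> l' \<in> S \<Longrightarrow> l \<noteq> l' \<Longrightarrow> p1_distinct (special_pt f c l) (special_pt f c l')"
    and "cdeg f c = (0, 0) \<Longrightarrow> 3 \<le> card S"
  shows "stable_at f c S"
  using assms unfolding stable_at_def by blast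

lemma stable_atD:
  assumes "stable_at f c S"
  shows "l \<in> S \<Longrightarrow> l' \<in> S \<Longrightarrow> l \<noteq> l' \<Longrightarrow> p1_distinct (special_pt f c l) (special_pt f c l')"
    and "cdeg f c = (0, 0) \<Longrightarrow> 3 \<le> card S"
  using assms unfolding stable_at_def by blast+

lemma stable_at_finite: "stable_at f c S \<Longrightarrow> cdeg f c = (0, 0) \<Longrightarrow> finite S"
  using stable_atD(2) card.infinite by fastforce

lemma stable_at_transfer:
  assumes "stable_at f c S" "bij_betw h S' S"
    and "\<And>l. l \<in> S' \<Longrightarrow> special_pt f' c' l = special_pt f c (h l)"
    and "cdeg f' c' = cdeg f c"
  shows "stable_at f' c' S'"
proof -
  have "p1_distinct (special_pt f' c' l) (special_pt f' c' l')"
    if "l \<in> S'" "l' \<in> S'" "l \<noteq> l'" for l l'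
  proof -
    have "h l \<in> S" "h l' \<in> S" "h l \<noteq> h l'"
      using that assms(2) by (auto simp: bij_betw_def inj_on_eq_iff)
    then show ?thesis using assms(1,3) that unfolding stable_at_def by auto
  qed
  moreover have "card S' = card S" using bij_betw_same_card[OF assms(2)] .
  ultimately show ?thesis using assms(1,4) unfolding stable_at_def by auto
qed

lemma stable_at_cong:
  "stable_at f c S \<Longrightarrow> (\<And>l. l \<in> S \<Longrightarrow> special_pt f' c' l = special_pt f c l) \<Longrightarrow>
   cdeg f' c' = cdeg f c \<Longrightarrow> stable_at f' c' S"
  by (rule stable_at_transfer[where h = id]) auto

lemma stable_at_replace:
  assumes "stable_at f c S" "l \<in> S" "l' \<notin> S"
    and "special_pt f' c' l' = special_pt f c l"
    and "\<And>x. x \<in> S \<Longrightarrow> x \<noteq> l \<Longrightarrow> special_pt f' c' x = special_pt f c x"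
    and "cdeg f' c' = cdeg f c"
  shows "stable_at f' c' (insert l' (S - {l}))"
proof (rule stable_at_transfer[OF assms(1), where h = "\<lambda>x. if x = l' then l else x"])
  show "bij_betw (\<lambda>x. if x = l' then l else x) (insert l' (S - {l})) S"
    using assms(2,3) unfolding bij_betw_def inj_on_def by (auto simp: image_iff)
qed (use assms(3-6) in auto)

definition tree_specials :: "nat set \<Rightarrow> nat set \<Rightarrow> nat \<Rightarrow> smap \<Rightarrow> nat \<Rightarrow> special set" where
  "tree_specials M V r f c =
     (if c \<noteq> r then {Up} else {}) \<union> {Down c' | c'. c' \<in> V \<and> c' \<noteq> r \<and> par f c' = c} \<union>
     {Mark j | j. j \<in> M \<and> mcomp f j = c}"

lemma mem_tree_specials [simp]:
  "Up \<in> tree_specials M V r f c \<longleftrightarrow> c \<noteq> r"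
  "Down c' \<in> tree_specials M V r f c \<longleftrightarrow> c' \<in> V \<and> c' \<noteq> r \<and> par f c' = c"
  "Mark j \<in> tree_specials M V r f c \<longleftrightarrow> j \<in> M \<and> mcomp f j = c"
  by (auto simp: tree_specials_def)

lemma mem_specials [simp]:
  "Up \<in> specials f c \<longleftrightarrow> 1 \<le> c"
  "Down c' \<in> specials f c \<longleftrightarrow> 1 \<le> c' \<and> c' < ncomp f \<and> par f c' = c"
  "Mark j \<in> specials f c \<longleftrightarrow> j \<in> {1, 2, 3} \<and> mcomp f j = c"
  by (auto simp: specials_def)

lemma special_set_eqI:
  "(Up \<in> A \<longleftrightarrow> Up \<in> B) \<Longrightarrow> (\<And>c. Down c \<in> A \<longleftrightarrow> Down c \<in> B) \<Longrightarrow>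
   (\<And>j. Mark j \<in> A \<longleftrightarrow> Mark j \<in> B) \<Longrightarrow> A = B"
  by (rule set_eqI) (metis special.exhaust)

lemma special_pt_case:
  "special_pt f c l = (case l of Up \<Rightarrow> qpt f c | Down c' \<Rightarrow> ppt f c' | Mark j \<Rightarrow> mpt f j)"
  by (cases l) auto

definition tree_degree :: "smap \<Rightarrow> nat set \<Rightarrow> nat \<times> nat" where
  "tree_degree f V = (\<Sum>c\<in>V. fst (cdeg f c), \<Sum>c\<in>V. snd (cdeg f c))"

lemma tree_degree_cong:
  "(\<And>c. c \<in> V \<Longrightarrow> cdeg f' c = cdeg f c) \<Longrightarrow> tree_degree f' V = tree_degree f V"
  unfolding tree_degree_def by simp

lemma tree_degree_insert_const:
  "finite V \<Longrightarrow> cdeg f b = (0, 0) \<Longrightarrow> tree_degree f (insert b V) = tree_degree f V"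
  unfolding tree_degree_def by (simp add: sum.insert_if)

lemma tree_degree_remove_const:
  "cdeg f c = (0, 0) \<Longrightarrow> tree_degree f (V - {c}) = tree_degree f V"
  unfolding tree_degree_def by (simp add: sum_diff1_nat)

definition attached :: "smap \<Rightarrow> (nat \<Rightarrow> real) \<Rightarrow> nat \<Rightarrow> bool" where
  "attached f rk c \<longleftrightarrow> rk (par f c) < rk c \<and> qpt f c \<noteq> (0, 0) \<and> ppt f c \<noteq> (0, 0) \<and>
     pt_eq (cval f c (qpt f c)) (cval f (par f c) (ppt f c))"

text \<open>The components form an arbitrary finite set V, every component other than the root r is
  glued to its parent, and the real-valued ranking rk only serves to make the parent relation
  well founded. Unlike \<^const>\<open>is_stable_map\<close>, which numbers the components so that parents
  precede children, this form is closed under inserting and deleting components, and changing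
  the root.\<close>

locale stable_tree =
  fixes n :: nat and d :: "nat \<times> nat" and M V :: "nat set" and r :: nat
    and rk :: "nat \<Rightarrow> real" and f :: smap
  assumes finite_V: "finite V" and root_in: "r \<in> V" and degree: "tree_degree f V = d"
    and morphism: "\<And>c. c \<in> V \<Longrightarrow> is_morphism n (fst (cdeg f c)) (snd (cdeg f c)) (cF f c) (cG f c)"
    and edge: "\<And>c. c \<in> V \<Longrightarrow> c \<noteq> r \<Longrightarrow> par f c \<in> V \<and> attached f rk c"
    and mark: "\<And>j. j \<in> M \<Longrightarrow> mcomp f j \<in> V \<and> mpt f j \<noteq> (0, 0)"
    and stable: "\<And>c. c \<in> V \<Longrightarrow> stable_at f c (tree_specials M V r f c)"
begin

lemma par_in: "c \<in> V \<Longrightarrow> c \<noteq> r \<Longrightarrow> par f c \<in> V"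
  and rank_par: "c \<in> V \<Longrightarrow> c \<noteq> r \<Longrightarrow> rk (par f c) < rk c"
  and qpt_nonzero: "c \<in> V \<Longrightarrow> c \<noteq> r \<Longrightarrow> qpt f c \<noteq> (0, 0)"
  and ppt_nonzero: "c \<in> V \<Longrightarrow> c \<noteq> r \<Longrightarrow> ppt f c \<noteq> (0, 0)"
  and glued: "c \<in> V \<Longrightarrow> c \<noteq> r \<Longrightarrow> pt_eq (cval f c (qpt f c)) (cval f (par f c) (ppt f c))"
  using edge unfolding attached_def by blast+

lemma mcomp_in: "j \<in> M \<Longrightarrow> mcomp f j \<in> V"
  and mpt_nonzero: "j \<in> M \<Longrightarrow> mpt f j \<noteq> (0, 0)"
  using mark by blast+

lemma special_pt_nonzero: "c \<in> V \<Longrightarrow> l \<in> tree_specials M V r f c \<Longrightarrow> special_pt f c l \<noteq> (0, 0)"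
  by (cases l) (auto simp: qpt_nonzero ppt_nonzero mpt_nonzero)

lemma rank_root:
  assumes "c \<in> V" "c \<noteq> r"
  shows "rk r < rk c"
proof (rule ccontr)
  define S where "S = {x \<in> V - {r}. rk x \<le> rk r}"
  assume "\<not> rk r < rk c"
  with assms have "S \<noteq> {}" unfolding S_def by auto
  moreover have "finite S" unfolding S_def using finite_V by simp
  ultimately obtain x where x: "x \<in> S" and min: "\<And>y. y \<in> S \<Longrightarrow> \<not> rk y < rk x"
    using arg_min_if_finite by metis
  then have "x \<in> V" "x \<noteq> r" "rk x \<le> rk r" unfolding S_def by auto
  with rank_par par_in have "rk (par f x) < rk x" "par f x \<in> V" by auto
  with min[of "par f x"] \<open>rk x \<le> rk r\<close> show False unfolding S_def by fastforce
qed

lemma root_has_child: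
  assumes "V \<noteq> {r}"
  obtains y where "y \<in> V" "y \<noteq> r" "par f y = r"
proof -
  have "V - {r} \<noteq> {}" "finite (V - {r})" using assms root_in finite_V by auto
  then obtain y where y: "y \<in> V - {r}" and min: "\<And>x. x \<in> V - {r} \<Longrightarrow> \<not> rk x < rk y"
    using arg_min_if_finite by metis
  with rank_par par_in have "par f y = r" by blast
  with y that show ?thesis by blast
qed

end

lemma stable_tree_of_stable_map:
  assumes "is_stable_map n d f"
  shows "stable_tree n d {1, 2, 3} {..<ncomp f} 0 real f"
proof
  fix c assume c: "c \<in> {..<ncomp f}"
  have "tree_specials {1, 2, 3} {..<ncomp f} 0 f c = specials f c"
    unfolding tree_specials_def specials_def by auto
  with assms c show "stable_at f c (tree_specials {1, 2, 3} {..<ncomp f} 0 f c)"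
    unfolding is_stable_map_def stable_at_def by simp
next
  fix c assume "c \<in> {..<ncomp f}" "c \<noteq> 0"
  with assms show "par f c \<in> {..<ncomp f} \<and> attached f real c"
    unfolding is_stable_map_def attached_def by (auto dest!: spec[of _ c])
qed (use assms in \<open>auto simp: is_stable_map_def tree_degree_def\<close>)

definition map_special :: "(nat \<Rightarrow> nat) \<Rightarrow> (nat \<Rightarrow> nat) \<Rightarrow> special \<Rightarrow> special" where
  "map_special hc hm l = (case l of Up \<Rightarrow> Up | Down c \<Rightarrow> Down (hc c) | Mark j \<Rightarrow> Mark (hm j))"

text \<open>Listing the components by increasing rank puts the root first and every parent before its
  children, as \<^const>\<open>is_stable_map\<close> requires.\<close>

lemma (in stable_tree) parents_first_enumeration:
  obtains e and N :: nat where "bij_betw e {..<N} V" "e 0 = r"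
    and "\<And>i. i < N \<Longrightarrow> e i \<noteq> r \<Longrightarrow> inv_into {..<N} e (par f (e i)) < i"
proof -
  define L where "L = sort_key rk (sorted_list_of_set V)"
  define idx where "idx = inv_into {..<length L} ((!) L)"
  have bij: "bij_betw ((!) L) {..<length L} V"
    unfolding L_def by (rule bij_betw_nth) (auto simp: finite_V)
  have L_in: "i < length L \<Longrightarrow> L ! i \<in> V" for i
    using bij_betw_apply[OF bij] by simp
  have idx_in: "x \<in> V \<Longrightarrow> idx x < length L" for x
    using bij_betw_apply[OF bij_betw_inv_into[OF bij]] unfolding idx_def by simp
  have L_idx: "x \<in> V \<Longrightarrow> L ! idx x = x" for x
    using bij_betw_inv_into_right[OF bij] unfolding idx_def .
  have sorted: "i \<le> j \<Longrightarrow> j < length L \<Longrightarrow> rk (L ! i) \<le> rk (L ! j)" for i j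
    using sorted_nth_mono[of "map rk L" i j] unfolding L_def by simp
  have "0 < length L" using idx_in[OF root_in] by linarith
  have "L ! 0 = r"
  proof (rule ccontr)
    assume "L ! 0 \<noteq> r"
    with rank_root L_in[OF \<open>0 < length L\<close>] have "rk r < rk (L ! 0)" by blast
    moreover have "rk (L ! 0) \<le> rk r" using sorted[of 0 "idx r"] idx_in L_idx root_in by simp
    ultimately show False by simp
  qed
  moreover have "idx (par f (L ! i)) < i" if "i < length L" "L ! i \<noteq> r" for i
  proof (rule ccontr)
    assume "\<not> idx (par f (L ! i)) < i"
    with that sorted[of i "idx (par f (L ! i))"] have "rk (L ! i) \<le> rk (par f (L ! i))"
      by (simp add: idx_in L_idx L_in par_in)
    with rank_par[OF L_in[OF that(1)] that(2)] show False by simp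
  qed
  ultimately show thesis using that[OF bij] unfolding idx_def by simp
qed

lemma (in stable_tree) ex_stable_map:
  assumes M: "M = {1, 2, 3}"
  shows "\<exists>g. is_stable_map n d g \<and> (\<forall>j\<in>{1, 2, 3}. ev g j = ev f j)"
proof -
  obtain e and N :: nat where bij: "bij_betw e {..<N} V" and e0: "e 0 = r"
    and par_first: "\<And>i. i < N \<Longrightarrow> e i \<noteq> r \<Longrightarrow> inv_into {..<N} e (par f (e i)) < i"
    by (rule parents_first_enumeration) blast
  define idx where "idx = inv_into {..<N} e"
  have idx_par: "i < N \<Longrightarrow> e i \<noteq> r \<Longrightarrow> idx (par f (e i)) < i" for i
    unfolding idx_def by (rule par_first)
  have e_in: "i < N \<Longrightarrow> e i \<in> V" for i
    using bij_betw_apply[OF bij] by simp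
  have idx_in: "x \<in> V \<Longrightarrow> idx x < N" for x
    using bij_betw_apply[OF bij_betw_inv_into[OF bij]] unfolding idx_def by simp
  have e_idx: "x \<in> V \<Longrightarrow> e (idx x) = x" for x
    using bij_betw_inv_into_right[OF bij] unfolding idx_def .
  have idx_e: "i < N \<Longrightarrow> idx (e i) = i" for i
    using bij_betw_inv_into_left[OF bij] unfolding idx_def by simp
  have "0 < N" using idx_in[OF root_in] by linarith
  have e_root: "e i = r \<longleftrightarrow> i = 0" if "i < N" for i
  proof
    assume "e i = r"
    have "i = idx (e i)" using idx_e that by simp
    also have "\<dots> = idx (e 0)" using \<open>e i = r\<close> e0 by simp
    also have "\<dots> = 0" using idx_e \<open>0 < N\<close> by simp
    finally show "i = 0" .
  qed (use e0 in simp)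
  then have root_e: "r = e i \<longleftrightarrow> i = 0" if "i < N" for i
    using that by (metis (full_types))
  have idx_pos: "x \<in> V \<Longrightarrow> x \<noteq> r \<Longrightarrow> 0 < idx x" for x
    using e_idx[of x] e0 by (cases "idx x") auto
  define g where "g = \<lparr>ncomp = N, cdeg = cdeg f \<circ> e, cF = cF f \<circ> e, cG = cG f \<circ> e,
    par = \<lambda>i. idx (par f (e i)), ppt = ppt f \<circ> e, qpt = qpt f \<circ> e, mcomp = idx \<circ> mcomp f,
    mpt = mpt f\<rparr>"
  have cval_g: "cval g i z = cval f (e i) z" for i z
    unfolding cval_def g_def by simp
  have specials_g: "bij_betw (map_special e id) (specials g i) (tree_specials M V r f (e i))"
    if "i < N" for i
    by (rule bij_betw_byWitness[where f' = "map_special idx id"])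
      (use that in \<open>auto simp: map_special_def M g_def e_root root_e e_in idx_e e_idx idx_in
                         idx_pos par_in mcomp_in Suc_le_eq split: special.splits\<close>)
  have stable_g: "stable_at g i (specials g i)" if "i < N" for i
    by (rule stable_at_transfer[OF stable specials_g])
      (use that in \<open>auto simp: g_def e_in map_special_def split: special.splits\<close>)
  have N: "ncomp g = N" by (simp add: g_def)
  have "is_stable_map n d g"
    unfolding is_stable_map_def N
  proof (intro conjI allI impI ballI)
    show "1 \<le> N" using \<open>0 < N\<close> by simp
    show "is_morphism n (fst (cdeg g i)) (snd (cdeg g i)) (cF g i) (cG g i)" if "i < N" for i
      using morphism e_in that by (simp add: g_def)
    show "(\<Sum>i<N. fst (cdeg g i)) = fst d" "(\<Sum>i<N. snd (cdeg g i)) = snd d"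
      using sum.reindex_bij_betw[OF bij, of "\<lambda>c. fst (cdeg f c)"]
        sum.reindex_bij_betw[OF bij, of "\<lambda>c. snd (cdeg f c)"]
      unfolding g_def by (simp_all flip: degree add: tree_degree_def)
    show "par g i < i" "qpt g i \<noteq> (0, 0)" "ppt g i \<noteq> (0, 0)"
      "pt_eq (cval g i (qpt g i)) (cval g (par g i) (ppt g i))" if "1 \<le> i \<and> i < N" for i
      using that edge[of "e i"] idx_par[of i] unfolding cval_g attached_def
      by (auto simp: g_def e_in e_root e_idx)
    show "mcomp g j < N" "mpt g j \<noteq> (0, 0)" if "j \<in> {1, 2, 3}" for j
      using that mcomp_in mpt_nonzero idx_in unfolding M by (simp_all add: g_def)
    show "p1_distinct (special_pt g i l) (special_pt g i l')"
      if "i < N" "l \<in> specials g i" "l' \<in> specials g i" "l \<noteq> l'" for i l l'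
      using stable_atD(1)[OF stable_g] that by blast
    show "3 \<le> card (specials g i)" if "i < N" "cdeg g i = (0, 0)" for i
      using stable_atD(2)[OF stable_g] that by blast
  qed
  moreover have "ev g j = ev f j" if "j \<in> M" for j
    using that unfolding ev_def cval_g by (simp add: g_def e_idx mcomp_in)
  ultimately show ?thesis unfolding M by blast
qed

lemma (in stable_tree) relabel_marks:
  assumes "bij \<sigma>"
  shows "stable_tree n d (\<sigma> -` M) V r rk (f\<lparr>mcomp := mcomp f \<circ> \<sigma>, mpt := mpt f \<circ> \<sigma>\<rparr>)"
    (is "stable_tree n d _ V r rk ?f")
proof
  fix c assume "c \<in> V"
  have "bij_betw (map_special id \<sigma>) (tree_specials (\<sigma> -` M) V r ?f c) (tree_specials M V r f c)"
    by (rule bij_betw_byWitness[where f' = "map_special id (inv \<sigma>)"])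
      (use assms in \<open>auto simp: map_special_def bij_is_inj bij_is_surj surj_f_inv_f
                         split: special.splits\<close>)
  from stable_at_transfer[OF stable[OF \<open>c \<in> V\<close>] this]
  show "stable_at ?f c (tree_specials (\<sigma> -` M) V r ?f c)"
    by (auto simp: map_special_def split: special.splits)
qed (use degree morphism edge mark in \<open>auto simp: tree_degree_def attached_def cval_def finite_V root_in\<close>)

lemma ev_relabel: "ev (f\<lparr>mcomp := mcomp f \<circ> \<sigma>, mpt := mpt f \<circ> \<sigma>\<rparr>) j = ev f (\<sigma> j)"
  unfolding ev_def cval_def by simp

lemma swap_marks_stable_map:
  assumes "is_stable_map n d f"
  obtains g where "is_stable_map n d g" "ev g 1 = ev f 1" "ev g 2 = ev f 3" "ev g 3 = ev f 2"
proof -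
  define \<sigma> :: "nat \<Rightarrow> nat" where "\<sigma> = id(2 := 3, 3 := 2)"
  have "\<sigma> \<circ> \<sigma> = id" unfolding \<sigma>_def by auto
  then have "bij \<sigma>" using o_bij by blast
  moreover have "\<sigma> -` {1, 2, 3} = {1, 2, 3}" unfolding \<sigma>_def by (auto split: if_splits)
  ultimately have "stable_tree n d {1, 2, 3} {..<ncomp f} 0 real
                     (f\<lparr>mcomp := mcomp f \<circ> \<sigma>, mpt := mpt f \<circ> \<sigma>\<rparr>)"
    using stable_tree.relabel_marks[OF stable_tree_of_stable_map[OF assms]] by metis
  from stable_tree.ex_stable_map[OF this] that show thesis
    by (auto simp: ev_relabel \<sigma>_def)
qed

section \<open>Forgetting a marked point\<close>

context stable_tree
begin

lemma forget_stable_mark: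
  assumes "m \<in> M"
    and "\<not> (cdeg f (mcomp f m) = (0, 0) \<and> card (tree_specials M V r f (mcomp f m)) = 3)"
  shows "stable_tree n d (M - {m}) V r rk f"
proof
  fix c assume "c \<in> V"
  have S: "tree_specials (M - {m}) V r f c = tree_specials M V r f c - {Mark m}"
    unfolding tree_specials_def by auto
  show "stable_at f c (tree_specials (M - {m}) V r f c)"
  proof (cases "cdeg f c = (0, 0) \<and> mcomp f m = c")
    case True
    with stable[OF \<open>c \<in> V\<close>] assms have "4 \<le> card (tree_specials M V r f c)"
      unfolding stable_at_def by auto
    with True assms(1) stable[OF \<open>c \<in> V\<close>] show ?thesis
      unfolding stable_at_def S by (auto simp: card_Diff_singleton_if)
  qed (use stable[OF \<open>c \<in> V\<close>] in \<open>auto simp: stable_at_def S card_Diff_singleton_if\<close>)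
qed (use finite_V root_in degree morphism edge mark in auto)

lemma reroot:
  assumes y: "y \<in> V" "y \<noteq> r" "par f y = r"
  defines "f' \<equiv> f\<lparr>par := (par f)(r := y), ppt := (ppt f)(r := qpt f y), qpt := (qpt f)(r := ppt f y)\<rparr>"
  shows "stable_tree n d M V y (rk(y := rk r - 1)) f'"
    and "tree_specials M V y f' r = insert Up (tree_specials M V r f r - {Down y})"
proof -
  have cval': "cval f' = cval f" by (simp add: f'_def cval_def[abs_def])
  have Sr: "tree_specials M V y f' r = insert Up (tree_specials M V r f r - {Down y})"
    using y root_in by (intro special_set_eqI) (auto simp: f'_def)
  then show "tree_specials M V y f' r = insert Up (tree_specials M V r f r - {Down y})" .
  show "stable_tree n d M V y (rk(y := rk r - 1)) f'"
  proof
    fix x assume "x \<in> V"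
    consider "x = r" | "x = y" | "x \<noteq> r" "x \<noteq> y" by blast
    then show "stable_at f' x (tree_specials M V y f' x)"
    proof cases
      case 1
      show ?thesis unfolding 1 Sr
        by (rule stable_at_replace[OF stable[OF root_in]])
          (use y root_in in \<open>auto simp: f'_def special_pt_case split: special.splits\<close>)
    next
      case 2
      have Sy: "tree_specials M V y f' y = insert (Down r) (tree_specials M V r f y - {Up})"
        using y root_in by (intro special_set_eqI) (auto simp: f'_def)
      show ?thesis unfolding 2 Sy
        by (rule stable_at_replace[OF stable[OF y(1)]])
          (use y root_in in \<open>auto simp: f'_def special_pt_case split: special.splits\<close>)
    next
      case 3
      then have "tree_specials M V y f' x = tree_specials M V r f x"
        using y root_in by (intro special_set_eqI) (auto simp: f'_def)
      with 3 show ?thesis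
        by (auto intro!: stable_at_cong[OF stable[OF \<open>x \<in> V\<close>]]
                 simp: f'_def special_pt_case split: special.splits)
    qed
  next
    fix x assume x: "x \<in> V" "x \<noteq> y"
    show "par f' x \<in> V \<and> attached f' (rk(y := rk r - 1)) x"
    proof (cases "x = r")
      case True
      with y edge[of y] show ?thesis
        unfolding attached_def cval' by (auto simp: f'_def root_in pt_eq_sym)
    next
      case False
      with rank_root[OF x(1)] have "rk r - 1 < rk x" by simp
      with x False y edge[of x] show ?thesis
        unfolding attached_def cval' by (auto simp: f'_def)
    qed
  qed (use finite_V degree morphism mark y(1) in \<open>simp_all add: f'_def tree_degree_def\<close>)
qed

lemma contract_edge:
  assumes c: "c \<in> V" "c \<noteq> r" "cdeg f c = (0, 0)"
    and S: "tree_specials M V r f c = {Mark m, Up, Down y}"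
  defines "f' \<equiv> f\<lparr>par := (par f)(y := par f c), ppt := (ppt f)(y := ppt f c)\<rparr>"
  shows "stable_tree n d (M - {m}) (V - {c}) r rk f'"
proof -
  have "Down y \<in> tree_specials M V r f c" "Mark m \<in> tree_specials M V r f c" unfolding S by simp_all
  then have y: "y \<in> V" "y \<noteq> r" "par f y = c" and m: "m \<in> M" "mcomp f m = c" by simp_all
  have only_child: "par f x \<noteq> c" if "x \<in> V" "x \<noteq> r" "x \<noteq> y" for x
  proof
    assume "par f x = c"
    with that have "Down x \<in> tree_specials M V r f c" by simp
    with \<open>x \<noteq> y\<close> show False unfolding S by simp
  qed
  have only_mark: "mcomp f j \<noteq> c" if "j \<in> M" "j \<noteq> m" for j
  proof
    assume "mcomp f j = c"
    with that have "Mark j \<in> tree_specials M V r f c" by simp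
    with \<open>j \<noteq> m\<close> show False unfolding S by simp
  qed
  define P where "P = par f c"
  have P: "P \<in> V" "rk P < rk c" unfolding P_def using c par_in rank_par by auto
  have "rk c < rk y" using y rank_par by fastforce
  have cval': "cval f' = cval f" by (simp add: f'_def cval_def[abs_def])
  show ?thesis
  proof
    fix x assume x: "x \<in> V - {c}"
    show "stable_at f' x (tree_specials (M - {m}) (V - {c}) r f' x)"
    proof (cases "x = P")
      case True
      have SP: "tree_specials (M - {m}) (V - {c}) r f' P =
          insert (Down y) (tree_specials M V r f P - {Down c})"
        using y m P c only_mark by (intro special_set_eqI) (auto simp: f'_def P_def)
      show ?thesis unfolding True SP
        by (rule stable_at_replace[OF stable[OF P(1)]])
          (use y c P in \<open>auto simp: f'_def P_def special_pt_case split: special.splits\<close>)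
    next
      case False
      have "tree_specials (M - {m}) (V - {c}) r f' x = tree_specials M V r f x"
        using x False y m only_mark by (intro special_set_eqI) (auto simp: f'_def P_def)
      with x False y show ?thesis
        by (auto intro!: stable_at_cong[OF stable] simp: f'_def P_def special_pt_case split: special.splits)
    qed
  next
    fix x assume x: "x \<in> V - {c}" "x \<noteq> r"
    show "par f' x \<in> V - {c} \<and> attached f' rk x"
    proof (cases "x = y")
      case True
      have "cval f c (ppt f y) = cval f c (qpt f c)" using cval_degree_0 c(3) .
      with y c edge[of y] edge[of c] have "pt_eq (cval f y (qpt f y)) (cval f P (ppt f c))"
        unfolding attached_def P_def by (metis pt_eq_trans)
      with True y c P \<open>rk c < rk y\<close> edge[of y] edge[of c] show ?thesis
        unfolding attached_def cval' by (auto simp: f'_def P_def)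
    next
      case False
      with x only_child edge[of x] show ?thesis
        unfolding attached_def cval' by (auto simp: f'_def)
    qed
  next
    have "tree_degree f' (V - {c}) = tree_degree f (V - {c})"
      by (simp add: f'_def tree_degree_def)
    with c degree show "tree_degree f' (V - {c}) = d" by (simp add: tree_degree_remove_const)
  qed (use finite_V root_in morphism mark c only_mark in \<open>auto simp: f'_def\<close>)
qed

lemma contract_leaf:
  assumes c: "c \<in> V" "c \<noteq> r" "cdeg f c = (0, 0)"
    and S: "tree_specials M V r f c = {Mark m, Up, Mark j}" and "j \<noteq> m"
  defines "f' \<equiv> f\<lparr>mcomp := (mcomp f)(j := par f c), mpt := (mpt f)(j := ppt f c)\<rparr>"
  shows "stable_tree n d (M - {m}) (V - {c}) r rk f'"
    and "i \<noteq> j \<Longrightarrow> ev f' i = ev f i" and "pt_eq (ev f j) (ev f' j)"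
proof -
  have "Mark m \<in> tree_specials M V r f c" "Mark j \<in> tree_specials M V r f c" unfolding S by simp_all
  then have m: "m \<in> M" "mcomp f m = c" and j: "j \<in> M" "mcomp f j = c" by simp_all
  have no_child: "par f x \<noteq> c" if "x \<in> V" "x \<noteq> r" for x
  proof
    assume "par f x = c"
    with that have "Down x \<in> tree_specials M V r f c" by simp
    then show False unfolding S by simp
  qed
  have only_marks: "mcomp f i \<noteq> c" if "i \<in> M" "i \<noteq> m" "i \<noteq> j" for i
  proof
    assume "mcomp f i = c"
    with that have "Mark i \<in> tree_specials M V r f c" by simp
    with that show False unfolding S by simp
  qed
  define P where "P = par f c"
  have P: "P \<in> V" "P \<noteq> c" unfolding P_def using c par_in rank_par by fastforce+
  have cval': "cval f' = cval f" by (simp add: f'_def cval_def[abs_def])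
  show "ev f' i = ev f i" if "i \<noteq> j" using that unfolding ev_def cval' by (simp add: f'_def)
  have "ev f j = cval f c (qpt f c)" unfolding ev_def j using cval_degree_0 c(3) .
  with c edge[of c] show "pt_eq (ev f j) (ev f' j)"
    unfolding ev_def cval' attached_def by (simp add: f'_def)
  show "stable_tree n d (M - {m}) (V - {c}) r rk f'"
  proof
    fix x assume x: "x \<in> V - {c}"
    show "stable_at f' x (tree_specials (M - {m}) (V - {c}) r f' x)"
    proof (cases "x = P")
      case True
      have SP: "tree_specials (M - {m}) (V - {c}) r f' P =
          insert (Mark j) (tree_specials M V r f P - {Down c})"
        using j m P c \<open>j \<noteq> m\<close> only_marks by (intro special_set_eqI) (auto simp: f'_def P_def)
      show ?thesis unfolding True SP
        by (rule stable_at_replace[OF stable[OF P(1)]])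
          (use j c P in \<open>auto simp: f'_def P_def special_pt_case split: special.splits\<close>)
    next
      case False
      have "tree_specials (M - {m}) (V - {c}) r f' x = tree_specials M V r f x"
        using x False j m only_marks no_child by (intro special_set_eqI) (auto simp: f'_def P_def)
      with x j show ?thesis
        by (auto intro!: stable_at_cong[OF stable] simp: f'_def special_pt_case split: special.splits)
    qed
  next
    fix x assume "x \<in> V - {c}" "x \<noteq> r"
    with no_child edge[of x] show "par f' x \<in> V - {c} \<and> attached f' rk x"
      unfolding attached_def cval' by (auto simp: f'_def)
  next
    fix i assume "i \<in> M - {m}"
    with P c ppt_nonzero only_marks mark[of i] show "mcomp f' i \<in> V - {c} \<and> mpt f' i \<noteq> (0, 0)"
      by (auto simp: f'_def P_def)
  next
    have "tree_degree f' (V - {c}) = tree_degree f (V - {c})"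
      by (simp add: f'_def tree_degree_def)
    with c degree show "tree_degree f' (V - {c}) = d" by (simp add: tree_degree_remove_const)
  qed (use finite_V root_in morphism c in \<open>auto simp: f'_def\<close>)
qed

lemma forget_unstable_mark:
  assumes "m \<in> M" "mcomp f m \<noteq> r" "cdeg f (mcomp f m) = (0, 0)"
    and "card (tree_specials M V r f (mcomp f m)) = 3"
  obtains V' rk' f' where "stable_tree n d (M - {m}) V' r rk' f'"
    and "\<And>j. j \<in> M - {m} \<Longrightarrow> pt_eq (ev f j) (ev f' j)"
proof -
  define c where "c = mcomp f m"
  define S where "S = tree_specials M V r f c"
  have "c \<in> V" unfolding c_def using assms(1) mcomp_in by blast
  have "Mark m \<in> S" "Up \<in> S" using assms unfolding S_def c_def by simp_all
  with assms(4) have "card (S - {Mark m, Up}) = 1"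
    unfolding S_def c_def by (simp add: card_Diff_subset)
  then obtain t where t: "S - {Mark m, Up} = {t}" by (rule card_1_singletonE)
  with \<open>Mark m \<in> S\<close> \<open>Up \<in> S\<close> have S: "S = {Mark m, Up, t}" and "t \<noteq> Mark m" "t \<noteq> Up"
    by auto
  show thesis
  proof (cases t)
    case (Down y)
    with S assms \<open>c \<in> V\<close> have "stable_tree n d (M - {m}) (V - {c}) r rk
        (f\<lparr>par := (par f)(y := par f c), ppt := (ppt f)(y := ppt f c)\<rparr>)"
      by (intro contract_edge) (auto simp: S_def c_def)
    moreover have "ev (f\<lparr>par := (par f)(y := par f c), ppt := (ppt f)(y := ppt f c)\<rparr>) j = ev f j" for j
      by (simp add: ev_def cval_def)
    ultimately show thesis using that pt_eq_refl by metis
  next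
    case (Mark j)
    with S assms \<open>c \<in> V\<close> \<open>t \<noteq> Mark m\<close>
    have "tree_specials M V r f c = {Mark m, Up, Mark j}" "j \<noteq> m"
      by (auto simp: S_def)
    from contract_leaf[OF \<open>c \<in> V\<close> _ _ this] assms that pt_eq_refl show thesis
      unfolding c_def by metis
  qed (use \<open>t \<noteq> Up\<close> in simp)
qed

lemma forget_mark:
  assumes "m \<in> M" "d \<noteq> (0, 0)"
  obtains V' r' rk' f' where "stable_tree n d (M - {m}) V' r' rk' f'"
    and "\<And>j. j \<in> M - {m} \<Longrightarrow> pt_eq (ev f j) (ev f' j)"
proof -
  define c where "c = mcomp f m"
  consider "\<not> (cdeg f c = (0, 0) \<and> card (tree_specials M V r f c) = 3)"
    | "cdeg f c = (0, 0)" "card (tree_specials M V r f c) = 3" "c \<noteq> r"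
    | "cdeg f c = (0, 0)" "card (tree_specials M V r f c) = 3" "c = r"
    by blast
  then show thesis
  proof cases
    case 1
    with forget_stable_mark assms(1) that pt_eq_refl show thesis unfolding c_def by metis
  next
    case 2
    with forget_unstable_mark assms(1) that show thesis unfolding c_def by metis
  next
    case 3
    have "V \<noteq> {r}"
    proof
      assume "V = {r}"
      with degree 3 assms(2) show False by (simp add: tree_degree_def)
    qed
    then obtain y where y: "y \<in> V" "y \<noteq> r" "par f y = r" by (rule root_has_child)
    define f' where "f' = f\<lparr>par := (par f)(r := y), ppt := (ppt f)(r := qpt f y), qpt := (qpt f)(r := ppt f y)\<rparr>"
    interpret rerooted: stable_tree n d M V y "rk(y := rk r - 1)" f'
      using reroot(1)[OF y] unfolding f'_def .
    have "tree_specials M V y f' r = insert Up (tree_specials M V r f r - {Down y})"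
      using reroot(2)[OF y] unfolding f'_def .
    moreover have "finite (tree_specials M V r f r)" using 3 card.infinite by fastforce
    ultimately have "card (tree_specials M V y f' r) = 3"
      using y 3 by (simp add: card_insert_if card_Diff_singleton_if)
    moreover have "ev f' = ev f" "mcomp f' = mcomp f" "cdeg f' = cdeg f"
      by (simp_all add: f'_def ev_def[abs_def] cval_def[abs_def])
    ultimately show thesis
      using rerooted.forget_unstable_mark[OF assms(1)] 3 y that unfolding c_def by metis
  qed
qed

end

section \<open>Adding a marked point\<close>

lemma stable_at_three:
  assumes "S = {a, b, c}" "a \<noteq> b" "a \<noteq> c" "b \<noteq> c"
    and "special_pt f x a = (1, 0)" "special_pt f x b = (0, 1)" "special_pt f x c = (1, 1)"
  shows "stable_at f x S"
  using assms unfolding stable_at_def p1_distinct_def by auto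

context stable_tree
begin

lemma add_mark_free:
  assumes "m \<notin> M" "c \<in> V" "z \<noteq> (0, 0)"
    and free: "\<And>l. l \<in> tree_specials M V r f c \<Longrightarrow> p1_distinct z (special_pt f c l)"
  defines "f' \<equiv> f\<lparr>mcomp := (mcomp f)(m := c), mpt := (mpt f)(m := z)\<rparr>"
  shows "stable_tree n d (insert m M) V r rk f'"
    and "j \<noteq> m \<Longrightarrow> ev f' j = ev f j" and "ev f' m = cval f c z"
proof -
  have cval': "cval f' = cval f" by (simp add: f'_def cval_def[abs_def])
  show "j \<noteq> m \<Longrightarrow> ev f' j = ev f j" "ev f' m = cval f c z"
    unfolding ev_def cval' by (simp_all add: f'_def)
  show "stable_tree n d (insert m M) V r rk f'"
  proof
    fix x assume "x \<in> V"
    show "stable_at f' x (tree_specials (insert m M) V r f' x)"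
    proof (cases "x = c")
      case True
      let ?S = "tree_specials M V r f c"
      have S': "tree_specials (insert m M) V r f' c = insert (Mark m) ?S"
        using assms(1) by (intro special_set_eqI) (auto simp: f'_def)
      have pts: "special_pt f' c l = special_pt f c l" if "l \<in> ?S" for l
        using that assms(1) by (auto simp: f'_def special_pt_case split: special.splits)
      note old = stable[OF \<open>c \<in> V\<close>]
      show ?thesis unfolding True S'
      proof (rule stable_atI)
        fix l l' assume l: "l \<in> insert (Mark m) ?S" "l' \<in> insert (Mark m) ?S" "l \<noteq> l'"
        have z: "special_pt f' c (Mark m) = z" by (simp add: f'_def)
        consider "l = Mark m" "l' \<in> ?S" | "l' = Mark m" "l \<in> ?S" | "l \<in> ?S" "l' \<in> ?S"
          using l by blast
        then show "p1_distinct (special_pt f' c l) (special_pt f' c l')"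
        proof cases
          case 1
          then show ?thesis using free[of l'] pts[of l'] z by simp
        next
          case 2
          then show ?thesis using free[of l] pts[of l] z by (simp add: p1_distinct_commute)
        next
          case 3
          then show ?thesis using stable_atD(1)[OF old] pts l(3) by simp
        qed
      next
        assume "cdeg f' c = (0, 0)"
        then have "cdeg f c = (0, 0)" by (simp add: f'_def)
        with stable_atD(2)[OF old] stable_at_finite[OF old] show "3 \<le> card (insert (Mark m) ?S)"
          by (simp add: card_insert_if)
      qed
    next
      case False
      have "tree_specials (insert m M) V r f' x = tree_specials M V r f x"
        using False assms(1) by (intro special_set_eqI) (auto simp: f'_def)
      with assms(1) show ?thesis
        by (auto intro!: stable_at_cong[OF stable[OF \<open>x \<in> V\<close>]]
                 simp: f'_def special_pt_case split: special.splits)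
    qed
  next
    fix x assume "x \<in> V" "x \<noteq> r"
    with edge[of x] show "par f' x \<in> V \<and> attached f' rk x"
      unfolding attached_def cval' by (simp add: f'_def)
  next
    fix j assume "j \<in> insert m M"
    with mark[of j] assms(2,3) show "mcomp f' j \<in> V \<and> mpt f' j \<noteq> (0, 0)"
      by (auto simp: f'_def)
  next
    show "tree_degree f' V = d" using degree by (simp add: f'_def tree_degree_def)
  qed (use finite_V root_in morphism in \<open>simp_all add: f'_def\<close>)
qed

lemma bubble_at_mark:
  assumes "m \<notin> M" "j \<in> M" "b \<notin> V"
  defines "c \<equiv> mcomp f j"
  defines "v \<equiv> cval f c (mpt f j)"
  defines "f' \<equiv> f\<lparr>cdeg := (cdeg f)(b := (0, 0)), cF := (cF f)(b := \<lambda>i k. fst v i),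
    cG := (cG f)(b := \<lambda>i k. snd v i), par := (par f)(b := c), ppt := (ppt f)(b := mpt f j),
    qpt := (qpt f)(b := (1, 0)), mcomp := (mcomp f)(j := b, m := b), mpt := (mpt f)(j := (0, 1), m := (1, 1))\<rparr>"
  shows "stable_tree n d (insert m M) (insert b V) r (rk(b := rk c + 1)) f'"
    and "i \<in> M \<Longrightarrow> ev f' i = ev f i" and "ev f' m = v"
proof -
  have c: "c \<in> V" "b \<noteq> c" "b \<noteq> r" and "m \<noteq> j"
    using assms(1-3) mcomp_in root_in unfolding c_def by auto
  have "v \<in> Xpts n" unfolding v_def using c morphism mpt_nonzero assms(2) by (simp add: cval_in_Xpts)
  have cval': "cval f' x z = (if x = b then v else cval f x z)" for x z
    by (simp add: f'_def cval_def curve_eval_const)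
  show "ev f' m = v" unfolding ev_def cval' by (simp add: f'_def)
  show "ev f' i = ev f i" if "i \<in> M" for i
    using that assms(3) mcomp_in[OF that] \<open>m \<noteq> j\<close> assms(1)
    unfolding ev_def cval' by (auto simp: f'_def v_def c_def)
  show "stable_tree n d (insert m M) (insert b V) r (rk(b := rk c + 1)) f'"
  proof
    fix x assume x: "x \<in> insert b V"
    consider "x = b" | "x = c" | "x \<in> V" "x \<noteq> c" using x by blast
    then show "stable_at f' x (tree_specials (insert m M) (insert b V) r f' x)"
    proof cases
      case 1
      have "tree_specials (insert m M) (insert b V) r f' b = {Up, Mark j, Mark m}"
        using c assms(1-3) par_in mcomp_in by (intro special_set_eqI) (auto simp: f'_def)
      then show ?thesis unfolding 1
        by (rule stable_at_three) (use \<open>m \<noteq> j\<close> in \<open>simp_all add: f'_def\<close>)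
    next
      case 2
      have Sc: "tree_specials (insert m M) (insert b V) r f' c =
          insert (Down b) (tree_specials M V r f c - {Mark j})"
        using c assms(1-3) by (intro special_set_eqI) (auto simp: f'_def c_def)
      show ?thesis unfolding 2 Sc
        by (rule stable_at_replace[OF stable[OF c(1)]])
          (use c assms(1-3) in \<open>auto simp: f'_def c_def special_pt_case split: special.splits\<close>)
    next
      case 3
      have "tree_specials (insert m M) (insert b V) r f' x = tree_specials M V r f x"
        using 3 c assms(1-3) par_in by (intro special_set_eqI) (auto simp: f'_def c_def)
      with 3 c assms(1-3) show ?thesis
        by (auto intro!: stable_at_cong[OF stable[OF \<open>x \<in> V\<close>]]
                 simp: f'_def c_def special_pt_case split: special.splits)
    qed
  next
    fix x assume x: "x \<in> insert b V" "x \<noteq> r"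
    show "par f' x \<in> insert b V \<and> attached f' (rk(b := rk c + 1)) x"
    proof (cases "x = b")
      case True
      with c mpt_nonzero[OF assms(2)] show ?thesis
        unfolding attached_def cval' by (simp add: f'_def v_def pt_eq_refl)
    next
      case False
      with x edge[of x] assms(3) have "par f x \<noteq> b" by auto
      with False x edge[of x] show ?thesis
        unfolding attached_def cval' by (simp add: f'_def)
    qed
  next
    fix i assume "i \<in> insert m M"
    with mark[of i] show "mcomp f' i \<in> insert b V \<and> mpt f' i \<noteq> (0, 0)"
      by (auto simp: f'_def)
  next
    fix x assume "x \<in> insert b V"
    with morphism[of x] is_morphism_const[OF \<open>v \<in> Xpts n\<close>]
    show "is_morphism n (fst (cdeg f' x)) (snd (cdeg f' x)) (cF f' x) (cG f' x)"
      by (auto simp: f'_def)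
  next
    have "tree_degree f' (insert b V) = tree_degree f' V"
      by (rule tree_degree_insert_const) (simp_all add: finite_V f'_def)
    also have "\<dots> = tree_degree f V"
      using assms(3) by (intro tree_degree_cong) (auto simp: f'_def)
    finally show "tree_degree f' (insert b V) = d" using degree by simp
  qed (use finite_V root_in in simp_all)
qed

lemma bubble_on_edge:
  assumes "m \<notin> M" "C \<in> V" "C \<noteq> r" "b \<notin> V"
  defines "P \<equiv> par f C"
  defines "v \<equiv> cval f P (ppt f C)"
  defines "f' \<equiv> f\<lparr>cdeg := (cdeg f)(b := (0, 0)), cF := (cF f)(b := \<lambda>i k. fst v i),
    cG := (cG f)(b := \<lambda>i k. snd v i), par := (par f)(b := P, C := b),
    ppt := (ppt f)(b := ppt f C, C := (0, 1)), qpt := (qpt f)(b := (1, 0)),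
    mcomp := (mcomp f)(m := b), mpt := (mpt f)(m := (1, 1))\<rparr>"
  shows "stable_tree n d (insert m M) (insert b V) r (rk(b := (rk P + rk C) / 2)) f'"
    and "i \<in> M \<Longrightarrow> ev f' i = ev f i" and "ev f' m = v"
proof -
  have P: "P \<in> V" "rk P < rk C" "P \<noteq> C"
    unfolding P_def using assms(2,3) par_in rank_par by fastforce+
  have b: "b \<noteq> C" "b \<noteq> P" "b \<noteq> r" using assms(2,4) P root_in by auto
  have "v \<in> Xpts n" unfolding v_def using assms(2,3) P morphism ppt_nonzero by (simp add: cval_in_Xpts)
  have cval': "cval f' x z = (if x = b then v else cval f x z)" for x z
    by (simp add: f'_def cval_def curve_eval_const)
  show "ev f' m = v" unfolding ev_def cval' by (simp add: f'_def)
  show "ev f' i = ev f i" if "i \<in> M" for i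
    using that assms(1,4) mcomp_in[OF that] unfolding ev_def cval' by (auto simp: f'_def)
  show "stable_tree n d (insert m M) (insert b V) r (rk(b := (rk P + rk C) / 2)) f'"
  proof
    fix x assume x: "x \<in> insert b V"
    consider "x = b" | "x = P" | "x = C" | "x \<in> V" "x \<noteq> P" "x \<noteq> C" using x by blast
    then show "stable_at f' x (tree_specials (insert m M) (insert b V) r f' x)"
    proof cases
      case 1
      have "tree_specials (insert m M) (insert b V) r f' b = {Up, Down C, Mark m}"
        using assms(1-4) b par_in mcomp_in by (intro special_set_eqI) (auto simp: f'_def)
      then show ?thesis unfolding 1
        by (rule stable_at_three) (use b in \<open>simp_all add: f'_def\<close>)
    next
      case 2
      have SP: "tree_specials (insert m M) (insert b V) r f' P =
          insert (Down b) (tree_specials M V r f P - {Down C})"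
        using assms(1-4) b P mcomp_in by (intro special_set_eqI) (auto simp: f'_def P_def)
      show ?thesis unfolding 2 SP
        by (rule stable_at_replace[OF stable[OF P(1)]])
          (use assms(1-4) b P in \<open>auto simp: f'_def P_def special_pt_case split: special.splits\<close>)
    next
      case 3
      have "tree_specials (insert m M) (insert b V) r f' C = tree_specials M V r f C"
        using assms(1-4) b P mcomp_in by (intro special_set_eqI) (auto simp: f'_def P_def)
      with assms(1-4) b P show ?thesis unfolding 3
        by (auto intro!: stable_at_cong[OF stable[OF assms(2)]]
                 simp: f'_def P_def special_pt_case split: special.splits)
    next
      case 4
      have "tree_specials (insert m M) (insert b V) r f' x = tree_specials M V r f x"
        using 4 assms(1-4) b P par_in mcomp_in by (intro special_set_eqI) (auto simp: f'_def P_def)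
      with 4 assms(1-4) b show ?thesis
        by (auto intro!: stable_at_cong[OF stable[OF \<open>x \<in> V\<close>]]
                 simp: f'_def P_def special_pt_case split: special.splits)
    qed
  next
    fix x assume x: "x \<in> insert b V" "x \<noteq> r"
    consider "x = b" | "x = C" | "x \<in> V" "x \<noteq> C" using x by blast
    then show "par f' x \<in> insert b V \<and> attached f' (rk(b := (rk P + rk C) / 2)) x"
    proof cases
      case 1
      with P b assms(2,3) ppt_nonzero show ?thesis
        unfolding attached_def cval' by (simp add: f'_def v_def pt_eq_refl)
    next
      case 2
      with P b assms(2,3) edge[of C] show ?thesis
        unfolding attached_def cval' by (simp add: f'_def v_def P_def)
    next
      case 3
      with x edge[of x] assms(4) have "par f x \<noteq> b" by auto
      with 3 x b assms(4) edge[of x] show ?thesis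
        unfolding attached_def cval' by (auto simp: f'_def)
    qed
  next
    fix i assume "i \<in> insert m M"
    with mark[of i] show "mcomp f' i \<in> insert b V \<and> mpt f' i \<noteq> (0, 0)"
      by (auto simp: f'_def)
  next
    fix x assume "x \<in> insert b V"
    with morphism[of x] is_morphism_const[OF \<open>v \<in> Xpts n\<close>]
    show "is_morphism n (fst (cdeg f' x)) (snd (cdeg f' x)) (cF f' x) (cG f' x)"
      by (auto simp: f'_def)
  next
    have "tree_degree f' (insert b V) = tree_degree f' V"
      by (rule tree_degree_insert_const) (simp_all add: finite_V f'_def)
    also have "\<dots> = tree_degree f V"
      using assms(4) by (intro tree_degree_cong) (auto simp: f'_def)
    finally show "tree_degree f' (insert b V) = d" using degree by simp
  qed (use finite_V root_in in simp_all)
qed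

text \<open>If the chosen point is a special point, the new marked point goes on a constant component
  sprouted there.\<close>

lemma add_mark:
  assumes "m \<notin> M" "c \<in> V" "z \<noteq> (0, 0)"
  obtains V' rk' f' where "stable_tree n d (insert m M) V' r rk' f'"
    and "\<And>j. j \<in> M \<Longrightarrow> ev f' j = ev f j" and "pt_eq (ev f' m) (cval f c z)"
proof (cases "\<forall>l\<in>tree_specials M V r f c. p1_distinct z (special_pt f c l)")
  case True
  with add_mark_free[OF assms] pt_eq_refl that show thesis by (metis (no_types, lifting) assms(1))
next
  case False
  then obtain l where l: "l \<in> tree_specials M V r f c" "\<not> p1_distinct z (special_pt f c l)"
    by blast
  with assms special_pt_nonzero
  have z: "pt_eq (cval f c (special_pt f c l)) (cval f c z)"
    by (metis cval_pt_eq_if_not_p1_distinct pt_eq_sym)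
  obtain b where "b \<notin> V" using finite_V ex_new_if_finite[OF infinite_UNIV_nat] by blast
  show thesis
  proof (cases l)
    case Up
    with l have "c \<noteq> r" by simp
    with glued[OF assms(2) this] z Up
    have "pt_eq (cval f (par f c) (ppt f c)) (cval f c z)"
      by (metis pt_eq_sym pt_eq_trans special_pt.simps(1))
    with bubble_on_edge[OF assms(1,2) \<open>c \<noteq> r\<close> \<open>b \<notin> V\<close>] that show thesis by metis
  next
    case (Down y)
    with l z have "y \<in> V" "y \<noteq> r" "pt_eq (cval f (par f y) (ppt f y)) (cval f c z)" by auto
    with bubble_on_edge[OF assms(1) this(1,2) \<open>b \<notin> V\<close>] that show thesis by metis
  next
    case (Mark j)
    with l z have "j \<in> M" "pt_eq (cval f (mcomp f j) (mpt f j)) (cval f c z)" by auto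
    with bubble_at_mark[OF assms(1) this(1) \<open>b \<notin> V\<close>] that show thesis by metis
  qed
qed

end

section \<open>The sets Gamma_d\<close>

lemma ev_in_Xpts: "is_stable_map n d f \<Longrightarrow> j \<in> {1, 2, 3} \<Longrightarrow> ev f j \<in> Xpts n"
  unfolding is_stable_map_def ev_def by (auto intro!: cval_in_Xpts)

lemma Gamma2_subset_Gamma1: "Gamma2 n d X D \<subseteq> Gamma1 n d X"
proof
  fix p assume "p \<in> Gamma2 n d X D"
  then obtain f where "p \<in> Xpts n" "is_stable_map n d f" "\<exists>a\<in>X. pt_eq (ev f 1) a" "pt_eq (ev f 3) p"
    unfolding Gamma2_def by blast
  moreover obtain g where "is_stable_map n d g" "ev g 1 = ev f 1" "ev g 2 = ev f 3"
    using swap_marks_stable_map[OF \<open>is_stable_map n d f\<close>] by metis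
  ultimately have "is_stable_map n d g \<and> (\<exists>a\<in>X. pt_eq (ev g 1) a) \<and> pt_eq (ev g 2) p"
    by simp
  with \<open>p \<in> Xpts n\<close> show "p \<in> Gamma1 n d X" unfolding Gamma1_def by blast
qed

text \<open>The divisor coordinate is constant on every component, and the gluing passes its
  vanishing on to the neighbouring components.\<close>

lemma divisor_coord_ev_iff_of_degree_0:
  assumes f: "is_stable_map n d f" and d: "dcomp d k = 0" and j: "j \<in> {1, 2, 3}" "j' \<in> {1, 2, 3}"
  shows "divisor_coord n k (ev f j) = 0 \<longleftrightarrow> divisor_coord n k (ev f j') = 0"
proof -
  have "(\<Sum>c<ncomp f. dcomp (cdeg f c) k) = 0"
    using f d unfolding is_stable_map_def dcomp_def by auto
  then have const: "divisor_coord n k (cval f c z) = divisor_coord n k (cval f c w)"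
    if "c < ncomp f" for c z w
    using that unfolding divisor_coord_cval by (simp add: form_eval_0)
  have "divisor_coord n k (cval f c z) = 0 \<longleftrightarrow> divisor_coord n k (cval f 0 (1, 0)) = 0"
    if "c < ncomp f" for c z
    using that
  proof (induction c arbitrary: z rule: less_induct)
    case (less c)
    show ?case
    proof (cases "c = 0")
      case True
      with const less.prems show ?thesis by metis
    next
      case False
      with f less.prems have "par f c < c"
        and glue: "pt_eq (cval f c (qpt f c)) (cval f (par f c) (ppt f c))"
        unfolding is_stable_map_def by auto
      have "divisor_coord n k (cval f c z) = divisor_coord n k (cval f c (qpt f c))"
        using const less.prems by blast
      with divisor_coord_pt_eq[OF glue] less.IH[OF \<open>par f c < c\<close>] \<open>par f c < c\<close> less.prems
      show ?thesis by simp
    qed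
  qed
  moreover have "mcomp f i < ncomp f" if "i \<in> {1, 2, 3}" for i
    using f that unfolding is_stable_map_def by auto
  ultimately show ?thesis using j unfolding ev_def by metis
qed

lemma Gamma2_eq_of_degree_0:
  assumes "dcomp d k = 0"
  shows "Gamma2 n d X (Ddiv n k) = Gamma1 n d X \<inter> Ddiv n k"
proof
  show "Gamma2 n d X (Ddiv n k) \<subseteq> Gamma1 n d X \<inter> Ddiv n k"
  proof
    fix p assume p: "p \<in> Gamma2 n d X (Ddiv n k)"
    then obtain f q where f: "p \<in> Xpts n" "is_stable_map n d f" "q \<in> Ddiv n k"
      "pt_eq (ev f 2) q" "pt_eq (ev f 3) p"
      unfolding Gamma2_def by blast
    with divisor_coord_ev_iff_of_degree_0[OF f(2) assms, of 2 3]
    have "divisor_coord n k p = 0"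
      by (simp add: Ddiv_iff divisor_coord_pt_eq)
    moreover have "p \<in> Gamma1 n d X" using p Gamma2_subset_Gamma1 by blast
    ultimately show "p \<in> Gamma1 n d X \<inter> Ddiv n k" using f(1) by (simp add: Ddiv_iff)
  qed
next
  show "Gamma1 n d X \<inter> Ddiv n k \<subseteq> Gamma2 n d X (Ddiv n k)"
  proof
    fix p assume "p \<in> Gamma1 n d X \<inter> Ddiv n k"
    then obtain f where f: "p \<in> Xpts n" "is_stable_map n d f" "\<exists>a\<in>X. pt_eq (ev f 1) a"
      "pt_eq (ev f 2) p" "divisor_coord n k p = 0"
      unfolding Gamma1_def by (auto simp: Ddiv_iff)
    with divisor_coord_ev_iff_of_degree_0[OF f(2) assms, of 2 3]
    have "ev f 3 \<in> Ddiv n k"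
      by (simp add: Ddiv_iff divisor_coord_pt_eq ev_in_Xpts)
    moreover obtain g where "is_stable_map n d g" "ev g 1 = ev f 1" "ev g 2 = ev f 3" "ev g 3 = ev f 2"
      using swap_marks_stable_map[OF f(2)] by metis
    ultimately show "p \<in> Gamma2 n d X (Ddiv n k)"
      using f pt_eq_refl unfolding Gamma2_def by fastforce
  qed
qed

lemma Gamma1_subset_Gamma2:
  assumes "dcomp d k > 0"
  shows "Gamma1 n d X \<subseteq> Gamma2 n d X (Ddiv n k)"
proof
  fix p assume "p \<in> Gamma1 n d X"
  then obtain f a where f: "p \<in> Xpts n" "is_stable_map n d f" "a \<in> X" "pt_eq (ev f 1) a"
    "pt_eq (ev f 2) p"
    unfolding Gamma1_def by blast
  interpret stable_tree n d "{1, 2, 3}" "{..<ncomp f}" 0 real f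
    using stable_tree_of_stable_map[OF f(2)] .
  have "d \<noteq> (0, 0)" using assms unfolding dcomp_def by (auto split: if_splits)
  moreover have "{1, 2, 3} - {3} = {1, 2 :: nat}" by auto
  ultimately obtain V1 r1 rk1 f1 where "stable_tree n d {1, 2} V1 r1 rk1 f1"
    and ev1: "\<And>j. j \<in> {1, 2} \<Longrightarrow> pt_eq (ev f j) (ev f1 j)"
    using forget_mark[of 3] by (metis insertCI)
  interpret T1: stable_tree n d "{1, 2}" V1 r1 rk1 f1 by fact
  have "(\<Sum>c\<in>V1. dcomp (cdeg f1 c) k) = dcomp d k"
    using T1.degree unfolding tree_degree_def dcomp_def by auto
  with assms have "\<exists>c\<in>V1. dcomp (cdeg f1 c) k \<noteq> 0"
    by (metis less_irrefl sum.neutral)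
  then obtain c where "c \<in> V1" "dcomp (cdeg f1 c) k > 0" by blast
  then obtain z where z: "z \<noteq> (0, 0)" "divisor_coord n k (cval f1 c z) = 0"
    unfolding divisor_coord_cval using binary_form_has_root by blast
  have "3 \<notin> {1, 2 :: nat}" and ins: "insert 3 {1, 2} = {1, 2, 3 :: nat}" by auto
  obtain V2 rk2 f2 where T2: "stable_tree n d {1, 2, 3} V2 r1 rk2 f2"
    and ev2: "\<And>j. j \<in> {1, 2} \<Longrightarrow> ev f2 j = ev f1 j" and ev2_3: "pt_eq (ev f2 3) (cval f1 c z)"
    using T1.add_mark[OF \<open>3 \<notin> {1, 2}\<close> \<open>c \<in> V1\<close> z(1)] unfolding ins by blast
  obtain g' where g': "is_stable_map n d g'" "\<And>j. j \<in> {1, 2, 3} \<Longrightarrow> ev g' j = ev f2 j"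
    using stable_tree.ex_stable_map[OF T2] by blast
  obtain g where g: "is_stable_map n d g" "ev g 1 = ev g' 1" "ev g 2 = ev g' 3" "ev g 3 = ev g' 2"
    using swap_marks_stable_map[OF g'(1)] by metis
  have "ev g 1 = ev f1 1" "ev g 3 = ev f1 2" "ev g 2 = ev f2 3"
    using g g' ev2 by simp_all
  then have "pt_eq (ev g 1) a" "pt_eq (ev g 3) p" "divisor_coord n k (ev g 2) = 0"
    using ev1[of 1] ev1[of 2] f(4,5) divisor_coord_pt_eq[OF ev2_3] z(2)
    by (auto intro: pt_eq_trans[OF pt_eq_sym])
  moreover have "ev g 2 \<in> Xpts n" using ev_in_Xpts[OF g(1)] by simp
  ultimately have "is_stable_map n d g \<and> (\<exists>a\<in>X. pt_eq (ev g 1) a) \<and>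
      (\<exists>q\<in>Ddiv n k. pt_eq (ev g 2) q) \<and> pt_eq (ev g 3) p"
    using g(1) f(3) pt_eq_refl[of "ev g 2"] by (auto simp: Ddiv_iff)
  with f(1) show "p \<in> Gamma2 n d X (Ddiv n k)" unfolding Gamma2_def by blast
qed

text \<open>Neither the Schubert variety nor the bounds on n and k play a role: the identity holds
  for every first constraint.\<close>

theorem lemma2p3:
  fixes n i j k :: nat and d :: "nat \<times> nat"
  assumes "n \<ge> 3" and "(i, j) \<in> WP n" and "k \<in> {1, 2}"
  shows "Gamma2 n d (schubert n i j) (Ddiv n k) =
           (if dcomp d k > 0 then Gamma1 n d (schubert n i j)
            else Gamma1 n d (schubert n i j) \<inter> Ddiv n k)"
proof (cases "dcomp d k > 0")
  case True
  with Gamma1_subset_Gamma2 Gamma2_subset_Gamma1 show ?thesis by (simp add: subset_antisym)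
next
  case False
  with Gamma2_eq_of_degree_0 show ?thesis by simp
qed

end
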